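(* The formula $\mathsf F(p\Rightarrow\mathsf X p)$ (for $p\in\mathbb P$) is falsifiable on some bi-relational model, but in every bi-relational model $(W,T,\le,S,[\![\cdot]\!])$ in which it is falsified (i.e. $[\![\mathsf F(p\Rightarrow\mathsf Xp)]\!]\neq W\times T$), both $W$ and $T$ are infinite. Consequently none of the following properties holds: (strong FMP) every formula falsifiable on a bi-relational model is falsifiable on one with $W$ and $T$ finite; (order FMP) ... on one with $W$ finite; (temporal FMP) ... on one with $T$ finite.
   Context: Fix a countably infinite set $\mathbb P$ of propositional variables. The language $\mathcal L$ is given by $\varphi,\psi ::= p \mid \varphi\wedge\psi \mid \varphi\vee\psi \mid \varphi\Rightarrow\psi \mid \varphi\Leftarrow\psi \mid \mathsf X\varphi \mid \mathsf Y\varphi \mid \mathsf G\varphi \mid \mathsf H\varphi \mid \varphi\,\mathsf U\,\psi \mid \varphi\,\mathsf S\,\psi$; $\top:=p_0\Rightarrow p_0$ for fixed $p_0$, and $\mathsf F\varphi:=\top\,\mathsf U\,\varphi$. A bi-relational frame is $(W,T,\le,S)$ with $(W,\le)$ a linear order and $S\colon T\to T$ a bijection. A bi-relational model adds a valuation $[\![\cdot]\!]\colon\mathcal L\to 2^{W\times T}$ with each $[\![p]\!]$ downward closed in the first coordinate and: $[\![\varphi\wedge\psi]\!]=[\![\varphi]\!]\cap[\![\psi]\!]$; $[\![\varphi\vee\psi]\!]=[\![\varphi]\!]\cup[\![\psi]\!]$; $(w,t)\in[\![\varphi\Rightarrow\psi]\!]$ iff for all $v\le w$, $(v,t)\in[\![\varphi]\!]$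 implies $(v,t)\in[\![\psi]\!]$; $(w,t)\in[\![\varphi\Leftarrow\psi]\!]$ iff some $v\ge w$ has $(v,t)\in[\![\varphi]\!]\setminus[\![\psi]\!]$; $(w,t)\in[\![\mathsf X\varphi]\!]$ iff $(w,S(t))\in[\![\varphi]\!]$; $(w,t)\in[\![\mathsf Y\varphi]\!]$ iff $(w,S^{-1}(t))\in[\![\varphi]\!]$; $(w,t)\in[\![\mathsf G\varphi]\!]$ iff $(w,S^n(t))\in[\![\varphi]\!]$ for all $n\ge0$; $\mathsf H$ dually with $S^{-n}$; $(w,t)\in[\![\varphi\,\mathsf U\,\psi]\!]$ iff there is $n\ge0$ with $(w,S^i(t))\in[\![\varphi]\!]$ for $i<n$ and $(w,S^n(t))\in[\![\psi]\!]$; $\mathsf S$ dually with $S^{-i}$. A formula is falsifiable on a model if $[\![\varphi]\!]\ne W\times T$. *)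

theory Defs
  imports Main
begin

datatype form =
    Var nat
  | And form form
  | Or form form
  | Imp form form
  | Coimp form form
  | Next form
  | Prev form
  | Glob form
  | Hist form
  | Until form form
  | Since form form

definition Top :: form where "Top = Imp (Var 0) (Var 0)"

definition Fut :: "form \<Rightarrow> form" where "Fut \<phi> = Until Top \<phi>"

text \<open>Bi-relational frame (W, T, le, S): le is a linear order on W given as a relation
  ((v,w) \<in> le means v \<le> w), S a bijection of T.\<close>
definition bi_frame :: "'w set \<Rightarrow> ('w \<times> 'w) set \<Rightarrow> 't set \<Rightarrow> ('t \<Rightarrow> 't) \<Rightarrow> bool" where
  "bi_frame W le T S \<longleftrightarrow> linear_order_on W le \<and> bij_betw S T T"

definition bi_model :: "'w set \<Rightarrow> ('w \<times> 'w) set \<Rightarrow> 't set \<Rightarrow> ('t \<Rightarrow> 't)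
    \<Rightarrow> (nat \<Rightarrow> ('w \<times> 't) set) \<Rightarrow> bool" where
  "bi_model W le T S V \<longleftrightarrow> bi_frame W le T S \<and>
     (\<forall>q. V q \<subseteq> W \<times> T \<and>
          (\<forall>w v t. (w, t) \<in> V q \<longrightarrow> v \<in> W \<longrightarrow> (v, w) \<in> le \<longrightarrow> (v, t) \<in> V q))"

fun sem :: "'w set \<Rightarrow> ('w \<times> 'w) set \<Rightarrow> 't set \<Rightarrow> ('t \<Rightarrow> 't)
    \<Rightarrow> (nat \<Rightarrow> ('w \<times> 't) set) \<Rightarrow> form \<Rightarrow> ('w \<times> 't) set" where
  "sem W le T S V (Var q) = V q"
| "sem W le T S V (And \<phi> \<psi>) = sem W le T S V \<phi> \<inter> sem W le T S V \<psi>"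
| "sem W le T S V (Or \<phi> \<psi>) = sem W le T S V \<phi> \<union> sem W le T S V \<psi>"
| "sem W le T S V (Imp \<phi> \<psi>) = {(w, t). w \<in> W \<and> t \<in> T \<and>
      (\<forall>v\<in>W. (v, w) \<in> le \<longrightarrow> (v, t) \<in> sem W le T S V \<phi> \<longrightarrow> (v, t) \<in> sem W le T S V \<psi>)}"
| "sem W le T S V (Coimp \<phi> \<psi>) = {(w, t). w \<in> W \<and> t \<in> T \<and>
      (\<exists>v\<in>W. (w, v) \<in> le \<and> (v, t) \<in> sem W le T S V \<phi> \<and> (v, t) \<notin> sem W le T S V \<psi>)}"
| "sem W le T S V (Next \<phi>) = {(w, t). w \<in> W \<and> t \<in> T \<and> (w, S t) \<in> sem W le T S V \<phi>}"
| "sem W le T S V (Prev \<phi>) = {(w, t). w \<in> W \<and> t \<in> T \<and> (w, inv_into T S t) \<in> sem W le T S V \<phi>}"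
| "sem W le T S V (Glob \<phi>) = {(w, t). w \<in> W \<and> t \<in> T \<and>
      (\<forall>n. (w, (S ^^ n) t) \<in> sem W le T S V \<phi>)}"
| "sem W le T S V (Hist \<phi>) = {(w, t). w \<in> W \<and> t \<in> T \<and>
      (\<forall>n. (w, (inv_into T S ^^ n) t) \<in> sem W le T S V \<phi>)}"
| "sem W le T S V (Until \<phi> \<psi>) = {(w, t). w \<in> W \<and> t \<in> T \<and>
      (\<exists>n. (\<forall>i<n. (w, (S ^^ i) t) \<in> sem W le T S V \<phi>) \<and> (w, (S ^^ n) t) \<in> sem W le T S V \<psi>)}"
| "sem W le T S V (Since \<phi> \<psi>) = {(w, t). w \<in> W \<and> t \<in> T \<and>
      (\<exists>n. (\<forall>i<n. (w, (inv_into T S ^^ i) t) \<in> sem W le T S V \<phi>) \<and>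
           (w, (inv_into T S ^^ n) t) \<in> sem W le T S V \<psi>)}"

definition falsified :: "'w set \<Rightarrow> ('w \<times> 'w) set \<Rightarrow> 't set \<Rightarrow> ('t \<Rightarrow> 't)
    \<Rightarrow> (nat \<Rightarrow> ('w \<times> 't) set) \<Rightarrow> form \<Rightarrow> bool" where
  "falsified W le T S V \<phi> \<longleftrightarrow> sem W le T S V \<phi> \<noteq> W \<times> T"

definition falsifiable :: "'w itself \<Rightarrow> 't itself \<Rightarrow> form \<Rightarrow> bool" where
  "falsifiable _ _ \<phi> \<longleftrightarrow> (\<exists>(W::'w set) le (T::'t set) S V. bi_model W le T S V \<and> falsified W le T S V \<phi>)"

definition falsifiable_where :: "'w itself \<Rightarrow> 't itself \<Rightarrow> ('w set \<Rightarrow> 't set \<Rightarrow> bool) \<Rightarrow> form \<Rightarrow> bool" where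
  "falsifiable_where _ _ P \<phi> \<longleftrightarrow>
     (\<exists>(W::'w set) le (T::'t set) S V. P W T \<and> bi_model W le T S V \<and> falsified W le T S V \<phi>)"

definition strong_FMP :: "'w itself \<Rightarrow> 't itself \<Rightarrow> bool" where
  "strong_FMP a b \<longleftrightarrow> (\<forall>\<phi>. falsifiable TYPE(int) TYPE(int) \<phi> \<longrightarrow>
      falsifiable_where a b (\<lambda>W T. finite W \<and> finite T) \<phi>)"

definition order_FMP :: "'w itself \<Rightarrow> 't itself \<Rightarrow> bool" where
  "order_FMP a b \<longleftrightarrow> (\<forall>\<phi>. falsifiable TYPE(int) TYPE(int) \<phi> \<longrightarrow>
      falsifiable_where a b (\<lambda>W T. finite W) \<phi>)"

definition temporal_FMP :: "'w itself \<Rightarrow> 't itself \<Rightarrow> bool" where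
  "temporal_FMP a b \<longleftrightarrow> (\<forall>\<phi>. falsifiable TYPE(int) TYPE(int) \<phi> \<longrightarrow>
      falsifiable_where a b (\<lambda>W T. finite T) \<phi>)"

end

theory Submission
  imports Defs
begin

text \<open>Suppose \<open>F(p \<Rightarrow> X p)\<close> fails at \<open>(w, t)\<close>. Then at every point \<open>t\<^sub>n = S\<^sup>n t\<close> of the orbit of
  \<open>t\<close> some \<open>v \<le> w\<close> satisfies \<open>p\<close> at \<open>t\<^sub>n\<close> but not at \<open>t\<^sub>n\<^sub>+\<^sub>1\<close>. By linearity and downward closure
  the set of \<open>v \<le> w\<close> satisfying \<open>p\<close> at \<open>t\<^sub>n\<close> therefore strictly shrinks from \<open>t\<^sub>n\<close> to \<open>t\<^sub>n\<^sub>+\<^sub>1\<close>. An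
  infinite strictly descending chain of subsets of \<open>W\<close> forces \<open>W\<close> to be infinite, and since
  the chain is indexed by the orbit, the orbit, hence \<open>T\<close>, is infinite as well.
  Conversely, on \<open>\<int> \<times> \<int>\<close> with \<open>S t = t + 1\<close> and \<open>p\<close> true at \<open>(v, t)\<close> iff \<open>v + t \<le> 0\<close>,
  the formula fails at \<open>(0, 0)\<close>.\<close>

lemma funpow_in_closed: "S ` T \<subseteq> T \<Longrightarrow> t \<in> T \<Longrightarrow> (S ^^ n) t \<in> T"
  by (induction n) auto

lemma sem_Fut_subset: "sem W le T S V (Fut \<phi>) \<subseteq> W \<times> T"
  by (auto simp: Fut_def)

lemma sem_Top [simp]: "sem W le T S V Top = W \<times> T"
  by (auto simp: Top_def)

lemma sem_Fut:
  assumes "S ` T \<subseteq> T"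
  shows "(w, t) \<in> sem W le T S V (Fut \<phi>) \<longleftrightarrow>
    w \<in> W \<and> t \<in> T \<and> (\<exists>n. (w, (S ^^ n) t) \<in> sem W le T S V \<phi>)"
  using funpow_in_closed[OF assms] by (auto simp: Fut_def)

lemma inj_if_strictly_decreasing:
  fixes f :: "nat \<Rightarrow> 'a set"
  assumes "\<And>n. f (Suc n) \<subset> f n"
  shows "inj f"
proof -
  have "strict_mono (\<lambda>n. - f n)"
    unfolding strict_mono_Suc_iff using assms by blast
  then have "inj (uminus \<circ> f)"
    by (simp add: strict_mono_imp_inj_on comp_def)
  then show ?thesis
    by (rule inj_on_imageI2)
qed

lemma infinite_if_shrinking_along_orbit:
  fixes D :: "'t \<Rightarrow> 'w set"
  assumes orbit_in: "\<And>n. (S ^^ n) t \<in> T"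
    and D_sub: "\<And>u. D u \<subseteq> W"
    and shrinks: "\<And>n. D ((S ^^ Suc n) t) \<subset> D ((S ^^ n) t)"
  shows "infinite W \<and> infinite T"
proof -
  have inj_D: "inj (D \<circ> (\<lambda>n. (S ^^ n) t))"
    using shrinks by (intro inj_if_strictly_decreasing) simp
  have "infinite (range (D \<circ> (\<lambda>n. (S ^^ n) t)))"
    using inj_D finite_imageD infinite_UNIV_nat by blast
  moreover have "range (D \<circ> (\<lambda>n. (S ^^ n) t)) \<subseteq> Pow W"
    using D_sub by auto
  ultimately have "infinite W"
    using finite_subset by blast
  moreover have "infinite (range (\<lambda>n. (S ^^ n) t))"
    using inj_on_imageI2[OF inj_D] finite_imageD infinite_UNIV_nat by blast
  then have "infinite T"
    using orbit_in finite_subset[of "range (\<lambda>n. (S ^^ n) t)" T] by blast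
  ultimately show ?thesis ..
qed

definition sat_below ::
    "'w set \<Rightarrow> ('w \<times> 'w) set \<Rightarrow> (nat \<Rightarrow> ('w \<times> 't) set) \<Rightarrow> nat \<Rightarrow> 'w \<Rightarrow> 't \<Rightarrow> 'w set" where
  "sat_below W le V q w u = {v \<in> W. (v, w) \<in> le \<and> (v, u) \<in> V q}"

lemma sat_below_shrinks:
  assumes model: "bi_model W le T S V"
    and w: "w \<in> W" and u: "u \<in> T"
    and fails: "(w, u) \<notin> sem W le T S V (Imp (Var q) (Next (Var q)))"
  shows "sat_below W le V q w (S u) \<subset> sat_below W le V q w u"
proof -
  have total: "total_on W le"
    using model by (simp add: bi_model_def bi_frame_def linear_order_on_def)
  have down: "\<And>x y t. (x, t) \<in> V q \<Longrightarrow> y \<in> W \<Longrightarrow> (y, x) \<in> le \<Longrightarrow> (y, t) \<in> V q"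
    using model by (auto simp: bi_model_def)
  obtain v where v: "v \<in> W" "(v, w) \<in> le" "(v, u) \<in> V q" "(v, S u) \<notin> V q"
    using fails w u by auto
  have "x \<in> sat_below W le V q w u" if x: "x \<in> sat_below W le V q w (S u)" for x
  proof -
    have "x \<in> W" "(x, w) \<in> le" "(x, S u) \<in> V q"
      using x by (auto simp: sat_below_def)
    moreover have "(v, x) \<notin> le"
      using down[of x "S u" v] \<open>(x, S u) \<in> V q\<close> v by blast
    ultimately have "(x, v) \<in> le"
      using total v(1,4) by (auto simp: total_on_def)
    then show ?thesis
      using down[OF v(3) \<open>x \<in> W\<close>] \<open>x \<in> W\<close> \<open>(x, w) \<in> le\<close> by (simp add: sat_below_def)
  qed
  moreover have "v \<in> sat_below W le V q w u" "v \<notin> sat_below W le V q w (S u)"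
    using v by (auto simp: sat_below_def)
  ultimately show ?thesis
    by blast
qed

lemma falsified_Fut_Imp_Next_infinite:
  assumes model: "bi_model W le T S V"
    and "falsified W le T S V (Fut (Imp (Var q) (Next (Var q))))"
  shows "infinite W \<and> infinite T"
proof -
  have S_T: "S ` T \<subseteq> T"
    using model by (simp add: bi_model_def bi_frame_def bij_betw_def)
  obtain w t where wt: "w \<in> W" "t \<in> T"
    and fails: "(w, t) \<notin> sem W le T S V (Fut (Imp (Var q) (Next (Var q))))"
    using assms(2) sem_Fut_subset unfolding falsified_def by blast
  have orbit_in: "(S ^^ n) t \<in> T" for n
    using funpow_in_closed[OF S_T wt(2)] .
  show ?thesis
  proof (rule infinite_if_shrinking_along_orbit[OF orbit_in])
    show "sat_below W le V q w u \<subseteq> W" for u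
      by (auto simp: sat_below_def)
    show "sat_below W le V q w ((S ^^ Suc n) t) \<subset> sat_below W le V q w ((S ^^ n) t)" for n
      using sat_below_shrinks[OF model wt(1) orbit_in] fails wt
      by (auto simp: sem_Fut[OF S_T])
  qed
qed

lemma Fut_Imp_Next_falsifiable_int:
  "falsifiable TYPE(int) TYPE(int) (Fut (Imp (Var q) (Next (Var q))))"
proof -
  define S :: "int \<Rightarrow> int" where "S t = t + 1" for t
  define V :: "nat \<Rightarrow> (int \<times> int) set" where "V r = {(v, t). v + t \<le> 0}" for r
  let ?le = "{(a, b :: int). a \<le> b}"
  have orbit: "(S ^^ n) t = t + int n" for n t
    by (induction n) (simp_all add: S_def)
  have "linear_order_on UNIV ?le"
    by (auto simp: linear_order_on_def partial_order_on_def preorder_on_def refl_on_def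
        trans_def antisym_def total_on_def)
  moreover have "bij S"
    by (rule bij_betw_byWitness[where f' = "\<lambda>t. t - 1"]) (auto simp: S_def)
  ultimately have model: "bi_model UNIV ?le UNIV S V"
    by (auto simp: bi_model_def bi_frame_def V_def)
  have "(0, 0) \<notin> sem UNIV ?le UNIV S V (Fut (Imp (Var q) (Next (Var q))))"
  proof
    assume "(0, 0) \<in> sem UNIV ?le UNIV S V (Fut (Imp (Var q) (Next (Var q))))"
    then obtain n where "(0, int n) \<in> sem UNIV ?le UNIV S V (Imp (Var q) (Next (Var q)))"
      by (auto simp: sem_Fut orbit)
    \<comment> \<open>the point \<open>v = -n \<le> 0\<close> satisfies \<open>p\<close> at time \<open>n\<close> but not at time \<open>n + 1\<close>\<close>
    then have "(- int n, int n) \<in> V q \<longrightarrow> (- int n, S (int n)) \<in> V q"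
      by auto
    then show False
      by (simp add: V_def S_def)
  qed
  then have "falsified UNIV ?le UNIV S V (Fut (Imp (Var q) (Next (Var q))))"
    by (auto simp: falsified_def)
  with model show ?thesis
    unfolding falsifiable_def by blast
qed

lemma not_falsifiable_where_Fut_Imp_Next:
  assumes "\<And>W T. P W T \<Longrightarrow> finite W \<or> finite T"
  shows "\<not> falsifiable_where TYPE('w) TYPE('t) P (Fut (Imp (Var q) (Next (Var q))))"
  using assms falsified_Fut_Imp_Next_infinite unfolding falsifiable_where_def by blast

theorem proposition4p2:
  fixes p :: nat
  shows "falsifiable TYPE(int) TYPE(int) (Fut (Imp (Var p) (Next (Var p))))
    \<and> (\<forall>(W::'w set) le (T::'t set) S V. bi_model W le T S V \<and>
           falsified W le T S V (Fut (Imp (Var p) (Next (Var p)))) \<longrightarrow> infinite W \<and> infinite T)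
    \<and> \<not> strong_FMP TYPE('w2) TYPE('t2)
    \<and> \<not> order_FMP TYPE('w2) TYPE('t2)
    \<and> \<not> temporal_FMP TYPE('w2) TYPE('t2)"
proof (intro conjI)
  show "falsifiable TYPE(int) TYPE(int) (Fut (Imp (Var p) (Next (Var p))))"
    by (rule Fut_Imp_Next_falsifiable_int)
  show "\<forall>(W::'w set) le (T::'t set) S V. bi_model W le T S V \<and>
      falsified W le T S V (Fut (Imp (Var p) (Next (Var p)))) \<longrightarrow> infinite W \<and> infinite T"
    using falsified_Fut_Imp_Next_infinite by blast
  show "\<not> strong_FMP TYPE('w2) TYPE('t2)"
    unfolding strong_FMP_def using Fut_Imp_Next_falsifiable_int
      not_falsifiable_where_Fut_Imp_Next[of "\<lambda>W T. finite W \<and> finite T" p] by blast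
  show "\<not> order_FMP TYPE('w2) TYPE('t2)"
    unfolding order_FMP_def using Fut_Imp_Next_falsifiable_int
      not_falsifiable_where_Fut_Imp_Next[of "\<lambda>W T. finite W" p] by blast
  show "\<not> temporal_FMP TYPE('w2) TYPE('t2)"
    unfolding temporal_FMP_def using Fut_Imp_Next_falsifiable_int
      not_falsifiable_where_Fut_Imp_Next[of "\<lambda>W T. finite T" p] by blast
qed

end
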